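(* In a CDec-POMDP with a homogeneous policy $\pi$ (as described in the context), let $f_w$ have the form $f_w(\mathbf{s}_t,\mathbf{a}_t)=\sum_{i\in S,j\in A}n_t(i,j)\,f_w\big(i,j,o(i,\mathbf{n}_{\mathbf{s}_t})\big)$. Then the approximate policy gradient $\sum_{t=1}^H\mathbb{E}_{\mathbf{s}_t,\mathbf{a}_t}\big[f_w(\mathbf{s}_t,\mathbf{a}_t)\nabla_\theta\log P(\mathbf{a}_t\mid\mathbf{s}_t)\big]$ equals $$\mathbb{E}_{\mathbf{n}_{1:H}\sim P(\cdot;\pi)}\Big[\sum_{t=1}^H\sum_{i\in S,j\in A}n_t(i,j)\,\nabla_\theta\log\pi\big(j\mid i,o(i,\mathbf{n}_t)\big)\,f_w\big(i,j,o(i,\mathbf{n}_t)\big)\Big],$$ where the expectation is over count-table sequences $\mathbf{n}_{1:H}$ (taking values in the set $\Omega_{1:H}$ of consistent count tables).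
   Context: CDec-POMDP: $M$ agents, finite local state space $S$, finite action set $A$, horizon $H$; at time $t$ agent $m$ is in state $s^m_t$ and takes action $a^m_t$. Counts: $n_t(i)=|\{m:s^m_t=i\}|$, $n_t(i,j)=|\{m:(s^m_t,a^m_t)=(i,j)\}|$, $n_t(i,j,i')=|\{m:(s^m_t,a^m_t,s^m_{t+1})=(i,j,i')\}|$; $\mathbf{n}_t=\mathbf{n}_{\mathbf{s}_t}=(n_t(i))_{i\in S}$. Initial local states are i.i.d. from $b_o$; given $\mathbf{s}_t$, all agents independently act according to a common policy $\pi_t(j\mid i,o(i,\mathbf{n}_{\mathbf{s}_t}))$ (differentiable in parameter $\theta$, positive probabilities; $o$ a fixed observation function), so $P(\mathbf{a}_t\mid\mathbf{s}_t)=\prod_m\pi_t(a^m_t\mid s^m_t,o(s^m_t,\mathbf{n}_{\mathbf{s}_t}))$; each agent then independently transitions with probability $\phi_t(i'\mid i,j,\mathbf{n}_{\mathbf{s}_t})$. $P(\mathbf{n}_{1:H};\pi)$ denotes the distribution of the sequence of count tables $\mathbf{n}_{1:H}=\{(n_t(i)),(n_t(i,j)),(n_t(i,j,i'))\}_{t=1}^H$ induced by the joint trajectory of all agents under this process. $\Omega_{1:H}$ is the set of count tables with $\sum_i n_t(i)=M$, $\sum_j n_t(i,j)=n_t(i)$, $\sum_{i'}n_t(i,j,i')=n_t(i,j)$ for all $i,j,t$. The function $f_w(i,j,o)$ does not depend on $\theta$; $\mathbb{E}_{\mathbf{s}_t,\mathbf{a}_t}$ is over the marginal of $(\mathbf{s}_t,\mathbf{a}_t)$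 under the process. *)

theory Defs
  imports "HOL-Analysis.Analysis"
begin

definition grad :: "('p::euclidean_space \<Rightarrow> real) \<Rightarrow> 'p \<Rightarrow> 'p" where
  "grad f x = (THE D. GDERIV f x :> D)"

(* Agents are the elements of the finite type 'm (so M = CARD('m)).
   A joint state is s :: 'm \<Rightarrow> 's, a joint action is a :: 'm \<Rightarrow> 'a. *)
definition cnt1 :: "('m::finite \<Rightarrow> 's) \<Rightarrow> 's \<Rightarrow> nat" where
  "cnt1 s i = card {m. s m = i}"

definition cnt2 :: "('m::finite \<Rightarrow> 's) \<Rightarrow> ('m \<Rightarrow> 'a) \<Rightarrow> 's \<Rightarrow> 'a \<Rightarrow> nat" where
  "cnt2 s a i j = card {m. s m = i \<and> a m = j}"

definition cnt3 :: "('m::finite \<Rightarrow> 's) \<Rightarrow> ('m \<Rightarrow> 'a) \<Rightarrow> ('m \<Rightarrow> 's) \<Rightarrow> 's \<Rightarrow> 'a \<Rightarrow> 's \<Rightarrow> nat" where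
  "cnt3 s a s' i j i' = card {m. s m = i \<and> a m = j \<and> s' m = i'}"

definition trajs :: "nat \<Rightarrow> ((nat \<Rightarrow> 'm \<Rightarrow> 's) \<times> (nat \<Rightarrow> 'm \<Rightarrow> 'a)) set" where
  "trajs H = (Pi\<^sub>E {1..Suc H} (\<lambda>_. UNIV)) \<times> (Pi\<^sub>E {1..H} (\<lambda>_. UNIV))"

(* Probability of the joint action given the joint state, P(a_t | s_t):
   pol \<theta> t i o j = \<pi>_t(j | i, o), obs i n = o(i, n). *)
definition jointpol ::
  "('p \<Rightarrow> nat \<Rightarrow> 's \<Rightarrow> 'o \<Rightarrow> 'a \<Rightarrow> real) \<Rightarrow> ('s \<Rightarrow> ('s \<Rightarrow> nat) \<Rightarrow> 'o) \<Rightarrow>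
   'p \<Rightarrow> nat \<Rightarrow> ('m::finite \<Rightarrow> 's) \<Rightarrow> ('m \<Rightarrow> 'a) \<Rightarrow> real" where
  "jointpol pol obs \<theta> t s a = (\<Prod>m\<in>UNIV. pol \<theta> t (s m) (obs (s m) (cnt1 s)) (a m))"

(* Probability of a joint trajectory under the process;
   phi t i j n i' = \<phi>_t(i' | i, j, n). *)
definition trajprob ::
  "nat \<Rightarrow> ('s \<Rightarrow> real) \<Rightarrow> ('p \<Rightarrow> nat \<Rightarrow> 's \<Rightarrow> 'o \<Rightarrow> 'a \<Rightarrow> real) \<Rightarrow> ('s \<Rightarrow> ('s \<Rightarrow> nat) \<Rightarrow> 'o) \<Rightarrow>
   (nat \<Rightarrow> 's \<Rightarrow> 'a \<Rightarrow> ('s \<Rightarrow> nat) \<Rightarrow> 's \<Rightarrow> real) \<Rightarrow> 'p \<Rightarrow>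
   (nat \<Rightarrow> 'm::finite \<Rightarrow> 's) \<times> (nat \<Rightarrow> 'm \<Rightarrow> 'a) \<Rightarrow> real" where
  "trajprob H b0 pol obs phi \<theta> sa =
     (let s = fst sa; a = snd sa in
      (\<Prod>m\<in>UNIV. b0 (s 1 m)) *
      (\<Prod>t\<in>{1..H}. jointpol pol obs \<theta> t (s t) (a t) *
                    (\<Prod>m\<in>UNIV. phi t (s t m) (a t m) (cnt1 (s t)) (s (Suc t) m))))"

definition margprob ::
  "nat \<Rightarrow> ('s \<Rightarrow> real) \<Rightarrow> ('p \<Rightarrow> nat \<Rightarrow> 's \<Rightarrow> 'o \<Rightarrow> 'a \<Rightarrow> real) \<Rightarrow> ('s \<Rightarrow> ('s \<Rightarrow> nat) \<Rightarrow> 'o) \<Rightarrow>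
   (nat \<Rightarrow> 's \<Rightarrow> 'a \<Rightarrow> ('s \<Rightarrow> nat) \<Rightarrow> 's \<Rightarrow> real) \<Rightarrow> 'p \<Rightarrow> nat \<Rightarrow>
   ('m::finite \<Rightarrow> 's) \<Rightarrow> ('m \<Rightarrow> 'a) \<Rightarrow> real" where
  "margprob H b0 pol obs phi \<theta> t x y =
     (\<Sum>sa\<in>{sa\<in>trajs H. fst sa t = x \<and> snd sa t = y}. trajprob H b0 pol obs phi \<theta> sa)"

(* Count tables at one time step: (n_t(i)), (n_t(i,j)), (n_t(i,j,i')). *)
type_synonym ('s,'a) ctab = "('s \<Rightarrow> nat) \<times> ('s \<Rightarrow> 'a \<Rightarrow> nat) \<times> ('s \<Rightarrow> 'a \<Rightarrow> 's \<Rightarrow> nat)"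

definition zero_ctab :: "('s,'a) ctab" where
  "zero_ctab = ((\<lambda>_. 0), (\<lambda>_ _. 0), (\<lambda>_ _ _. 0))"

definition counts :: "nat \<Rightarrow> (nat \<Rightarrow> 'm::finite \<Rightarrow> 's) \<times> (nat \<Rightarrow> 'm \<Rightarrow> 'a) \<Rightarrow> nat \<Rightarrow> ('s,'a) ctab" where
  "counts H sa t =
     (if t \<in> {1..H}
      then (cnt1 (fst sa t), cnt2 (fst sa t) (snd sa t), cnt3 (fst sa t) (snd sa t) (fst sa (Suc t)))
      else zero_ctab)"

definition Omega :: "nat \<Rightarrow> nat \<Rightarrow> (nat \<Rightarrow> ('s::finite,'a::finite) ctab) set" where
  "Omega M H = {N. (\<forall>t\<in>{1..H}.
        (\<Sum>i\<in>UNIV. fst (N t) i) = M \<and>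
        (\<forall>i. (\<Sum>j\<in>UNIV. fst (snd (N t)) i j) = fst (N t) i) \<and>
        (\<forall>i j. (\<Sum>i'\<in>UNIV. snd (snd (N t)) i j i') = fst (snd (N t)) i j)) \<and>
      (\<forall>t. t \<notin> {1..H} \<longrightarrow> N t = zero_ctab)}"

definition countprob ::
  "nat \<Rightarrow> ('s \<Rightarrow> real) \<Rightarrow> ('p \<Rightarrow> nat \<Rightarrow> 's \<Rightarrow> 'o \<Rightarrow> 'a \<Rightarrow> real) \<Rightarrow> ('s \<Rightarrow> ('s \<Rightarrow> nat) \<Rightarrow> 'o) \<Rightarrow>
   (nat \<Rightarrow> 's \<Rightarrow> 'a \<Rightarrow> ('s \<Rightarrow> nat) \<Rightarrow> 's \<Rightarrow> real) \<Rightarrow> 'p \<Rightarrow> 'm::finite itself \<Rightarrow>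
   (nat \<Rightarrow> ('s,'a) ctab) \<Rightarrow> real" where
  "countprob H b0 pol obs phi \<theta> _ N =
     (\<Sum>sa\<in>{sa\<in>(trajs H :: ((nat \<Rightarrow> 'm \<Rightarrow> 's) \<times> (nat \<Rightarrow> 'm \<Rightarrow> 'a)) set). counts H sa = N}.
        trajprob H b0 pol obs phi \<theta> sa)"

end

theory Submission
  imports Defs
begin

(* The joint log-likelihood log P(a_t | s_t) is the sum over agents of log pi(a^m_t | s^m_t, o), so
   its gradient is the sum of the individual scores; the critic f_w is likewise a sum over agents.
   Given s_t the agents act independently and every individual score has conditional mean zero,
   so in the product all cross terms (critic value of agent m times score of another agent) vanish.
   The diagonal terms depend on (s_t, a_t) only through the counts n_t(i,j), and the conditional
   expectation given s_t may be taken inside the expectation over trajectories since past and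
   future are probability-normalised. Regrouping trajectories by their count tables gives the
   expectation under P(n_{1:H}; pi). *)

lemma has_gderiv_unique:
  assumes "GDERIV f x :> D" and "GDERIV f x :> E"
  shows "D = E"
proof -
  have "(\<lambda>h. h \<bullet> D) = (\<lambda>h. h \<bullet> E)"
    using assms unfolding gderiv_def by (rule has_derivative_unique)
  then have "(D - E) \<bullet> D = (D - E) \<bullet> E" by metis
  then have "(D - E) \<bullet> (D - E) = 0" by (simp add: inner_diff_right)
  then show ?thesis by simp
qed

lemma grad_eqI: "GDERIV f x :> D \<Longrightarrow> grad f x = D"
  unfolding grad_def using has_gderiv_unique by blast

lemma has_gderiv_grad:
  fixes f :: "'p::euclidean_space \<Rightarrow> real"
  assumes "f differentiable (at x)"
  shows "GDERIV f x :> grad f x"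
proof -
  obtain f' where f': "(f has_derivative f') (at x)"
    using assms unfolding differentiable_def by blast
  have "f' = (\<lambda>h. h \<bullet> adjoint f' 1)"
    using adjoint_works[OF has_derivative_linear[OF f']] by auto
  with f' have "GDERIV f x :> adjoint f' 1"
    unfolding gderiv_def by simp
  then show ?thesis by (simp add: grad_eqI)
qed

lemma has_gderiv_sum:
  assumes "\<And>i. i \<in> I \<Longrightarrow> GDERIV (f i) x :> D i"
  shows "GDERIV (\<lambda>y. \<Sum>i\<in>I. f i y) x :> (\<Sum>i\<in>I. D i)"
proof -
  have "((\<lambda>y. \<Sum>i\<in>I. f i y) has_derivative (\<lambda>h. \<Sum>i\<in>I. h \<bullet> D i)) (at x)"
    using assms unfolding gderiv_def by (intro has_derivative_sum) auto
  then show ?thesis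
    unfolding gderiv_def by (simp add: inner_sum_right)
qed

lemma has_gderiv_ln:
  assumes "GDERIV f x :> D" and "f x > 0"
  shows "GDERIV (\<lambda>y. ln (f y)) x :> (1 / f x) *\<^sub>R D"
  using GDERIV_DERIV_compose[OF assms(1) DERIV_ln[OF assms(2)]] by (simp add: divide_inverse)

lemma grad_ln_prod:
  fixes p :: "'m::finite \<Rightarrow> 'p::euclidean_space \<Rightarrow> real"
  assumes pos: "\<And>m \<eta>. p m \<eta> > 0" and diff: "\<And>m. p m differentiable (at \<theta>)"
  shows "grad (\<lambda>\<eta>. ln (\<Prod>m\<in>UNIV. p m \<eta>)) \<theta> = (\<Sum>m\<in>UNIV. grad (\<lambda>\<eta>. ln (p m \<eta>)) \<theta>)"
proof -
  have ln_prod_eq: "(\<lambda>\<eta>. ln (\<Prod>m\<in>UNIV. p m \<eta>)) = (\<lambda>\<eta>. \<Sum>m\<in>UNIV. ln (p m \<eta>))"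
    using pos by (simp add: ln_prod less_imp_neq[symmetric])
  have "GDERIV (\<lambda>\<eta>. ln (p m \<eta>)) \<theta> :> grad (\<lambda>\<eta>. ln (p m \<eta>)) \<theta>" for m
    using has_gderiv_ln[OF has_gderiv_grad[OF diff] pos] grad_eqI by metis
  then show ?thesis
    unfolding ln_prod_eq by (intro grad_eqI has_gderiv_sum)
qed

lemma expected_grad_ln_eq_0:
  fixes p :: "'a::finite \<Rightarrow> 'p::euclidean_space \<Rightarrow> real"
  assumes pos: "\<And>j \<eta>. p j \<eta> > 0" and sum_1: "\<And>\<eta>. (\<Sum>j\<in>UNIV. p j \<eta>) = 1"
    and diff: "\<And>j. p j differentiable (at \<theta>)"
  shows "(\<Sum>j\<in>UNIV. p j \<theta> *\<^sub>R grad (\<lambda>\<eta>. ln (p j \<eta>)) \<theta>) = 0"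
proof -
  have "grad (\<lambda>\<eta>. ln (p j \<eta>)) \<theta> = (1 / p j \<theta>) *\<^sub>R grad (p j) \<theta>" for j
    by (intro grad_eqI has_gderiv_ln has_gderiv_grad diff pos)
  then have "p j \<theta> *\<^sub>R grad (\<lambda>\<eta>. ln (p j \<eta>)) \<theta> = grad (p j) \<theta>" for j
    using pos[of j \<theta>] by simp
  moreover have "GDERIV (\<lambda>\<eta>. \<Sum>j\<in>UNIV. p j \<eta>) \<theta> :> (\<Sum>j\<in>UNIV. grad (p j) \<theta>)"
    by (intro has_gderiv_sum has_gderiv_grad diff)
  then have "(\<Sum>j\<in>UNIV. grad (p j) \<theta>) = 0"
    unfolding sum_1 using GDERIV_const has_gderiv_unique by blast
  ultimately show ?thesis by simp
qed

lemma sum_fun_prod: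
  fixes q :: "'m::finite \<Rightarrow> 'a::finite \<Rightarrow> 'c::comm_semiring_1"
  shows "(\<Sum>y\<in>UNIV. \<Prod>m\<in>UNIV. q m (y m)) = (\<Prod>m\<in>UNIV. \<Sum>j\<in>UNIV. q m j)"
  using prod_sum_PiE[of "UNIV::'m set" "\<lambda>_. UNIV::'a set" q] by simp

lemma sum_prod_cross_term_eq_0:
  fixes p :: "'m::finite \<Rightarrow> 'a::finite \<Rightarrow> real" and A :: "'a \<Rightarrow> real"
    and B :: "'a \<Rightarrow> 'v::euclidean_space"
  assumes "m \<noteq> m'" and mean_0: "(\<Sum>j\<in>UNIV. p m' j *\<^sub>R B j) = 0"
  shows "(\<Sum>y\<in>UNIV. (\<Prod>k\<in>UNIV. p k (y k)) *\<^sub>R (A (y m) *\<^sub>R B (y m'))) = 0"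
proof (rule euclidean_eqI)
  fix b :: 'v
  \<comment> \<open>In the direction b the summand is a product of per-agent factors, so the sum factorises.\<close>
  define q where
    "q k j = p k j * (if k = m then A j else 1) * (if k = m' then B j \<bullet> b else 1)" for k j
  have "(\<Sum>j\<in>UNIV. q m' j) = (\<Sum>j\<in>UNIV. p m' j *\<^sub>R B j) \<bullet> b"
    using \<open>m \<noteq> m'\<close> by (simp add: q_def inner_sum_left)
  then have factor_m'_eq_0: "(\<Sum>j\<in>UNIV. q m' j) = 0"
    using mean_0 by simp
  have "(\<Sum>y\<in>UNIV. (\<Prod>k\<in>UNIV. p k (y k)) *\<^sub>R (A (y m) *\<^sub>R B (y m'))) \<bullet> b
      = (\<Sum>y\<in>UNIV. \<Prod>k\<in>UNIV. q k (y k))"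
    unfolding q_def prod.distrib by (simp add: inner_sum_left prod.delta mult.assoc)
  also have "\<dots> = (\<Prod>k\<in>UNIV. \<Sum>j\<in>UNIV. q k j)"
    by (rule sum_fun_prod)
  also have "\<dots> = 0"
    using factor_m'_eq_0 by (intro prod_zero) auto
  finally show "(\<Sum>y\<in>UNIV. (\<Prod>k\<in>UNIV. p k (y k)) *\<^sub>R (A (y m) *\<^sub>R B (y m'))) \<bullet> b = 0 \<bullet> b"
    by simp
qed

lemma sum_card_fibers:
  fixes f :: "'m::finite \<Rightarrow> 'j::finite"
  shows "(\<Sum>j\<in>UNIV. card {m. P m \<and> f m = j}) = card {m. P m}"
  using sum.group[of "{m. P m}" UNIV f "\<lambda>_. 1::nat"] by simp

lemma sum_cnt1: "(\<Sum>i\<in>UNIV. cnt1 (s :: 'm::finite \<Rightarrow> 's::finite) i) = CARD('m)"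
  unfolding cnt1_def using sum_card_fibers[of "\<lambda>_. True" s] by simp

lemma sum_cnt2: "(\<Sum>j\<in>UNIV. cnt2 (s :: 'm::finite \<Rightarrow> 's) (a :: 'm \<Rightarrow> 'a::finite) i j) = cnt1 s i"
  unfolding cnt1_def cnt2_def by (rule sum_card_fibers)

lemma sum_cnt3:
  "(\<Sum>i'\<in>UNIV. cnt3 (s :: 'm::finite \<Rightarrow> 's::finite) a s' i j i') = cnt2 s a i j"
  unfolding cnt3_def cnt2_def using sum_card_fibers[of "\<lambda>m. s m = i \<and> a m = j" s']
  by (simp add: conj_assoc)

lemma sum_cnt2_scaleR:
  fixes x :: "'m::finite \<Rightarrow> 's::finite" and y :: "'m \<Rightarrow> 'a::finite"
    and h :: "'s \<Rightarrow> 'a \<Rightarrow> 'v::real_vector"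
  shows "(\<Sum>i\<in>UNIV. \<Sum>j\<in>UNIV. real (cnt2 x y i j) *\<^sub>R h i j) = (\<Sum>m\<in>UNIV. h (x m) (y m))"
proof -
  have "(\<Sum>m\<in>UNIV. h (x m) (y m)) =
        (\<Sum>ij\<in>UNIV. \<Sum>m\<in>{m. m \<in> UNIV \<and> (x m, y m) = ij}. h (x m) (y m))"
    by (rule sum.group[symmetric]) auto
  also have "\<dots> = (\<Sum>(i, j)\<in>UNIV. \<Sum>m | x m = i \<and> y m = j. h i j)"
    by (intro sum.cong) auto
  also have "\<dots> = (\<Sum>(i, j)\<in>UNIV. real (cnt2 x y i j) *\<^sub>R h i j)"
    by (intro sum.cong refl) (clarsimp simp: cnt2_def sum_constant_scaleR)
  finally show ?thesis
    by (simp add: sum.cartesian_product UNIV_Times_UNIV[symmetric] del: UNIV_Times_UNIV)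
qed

lemma expected_joint_score_eq_sum_local_scores:
  fixes pol :: "'p::euclidean_space \<Rightarrow> nat \<Rightarrow> 's::finite \<Rightarrow> 'o \<Rightarrow> 'a::finite \<Rightarrow> real"
    and x :: "'m::finite \<Rightarrow> 's"
  assumes pol_pos: "\<And>\<theta>' t i ob j. pol \<theta>' t i ob j > 0"
    and pol_sum: "\<And>\<theta>' t i ob. (\<Sum>j\<in>UNIV. pol \<theta>' t i ob j) = 1"
    and pol_diff: "\<And>\<theta>' t i ob j. (\<lambda>\<eta>. pol \<eta> t i ob j) differentiable (at \<theta>')"
  shows "(\<Sum>y\<in>UNIV. jointpol pol obs \<theta> t x y *\<^sub>R
           ((\<Sum>i\<in>UNIV. \<Sum>j\<in>UNIV. real (cnt2 x y i j) * fw i j (obs i (cnt1 x))) *\<^sub>R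
              grad (\<lambda>\<eta>. ln (jointpol pol obs \<eta> t x y)) \<theta>))
       = (\<Sum>y\<in>UNIV. jointpol pol obs \<theta> t x y *\<^sub>R
           (\<Sum>i\<in>UNIV. \<Sum>j\<in>UNIV. (real (cnt2 x y i j) * fw i j (obs i (cnt1 x))) *\<^sub>R
              grad (\<lambda>\<eta>. ln (pol \<eta> t i (obs i (cnt1 x)) j)) \<theta>))"
proof -
  define ob where "ob m = obs (x m) (cnt1 x)" for m
  define P where "P y = (\<Prod>m\<in>UNIV. pol \<theta> t (x m) (ob m) (y m))" for y :: "'m \<Rightarrow> 'a"
  define f where "f y m = fw (x m) (y m) (ob m)" for y :: "'m \<Rightarrow> 'a" and m
  define g where "g y m = grad (\<lambda>\<eta>. ln (pol \<eta> t (x m) (ob m) (y m))) \<theta>" for y :: "'m \<Rightarrow> 'a" and m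
  have P: "jointpol pol obs \<theta> t x y = P y" for y
    unfolding jointpol_def P_def ob_def ..
  have f: "(\<Sum>i\<in>UNIV. \<Sum>j\<in>UNIV. real (cnt2 x y i j) * fw i j (obs i (cnt1 x))) = (\<Sum>m\<in>UNIV. f y m)"
    for y
    using sum_cnt2_scaleR[of x y "\<lambda>i j. fw i j (obs i (cnt1 x))"] by (simp add: f_def ob_def)
  have g: "grad (\<lambda>\<eta>. ln (jointpol pol obs \<eta> t x y)) \<theta> = (\<Sum>m\<in>UNIV. g y m)" for y
    unfolding jointpol_def g_def ob_def by (intro grad_ln_prod pol_pos pol_diff)
  have fg: "(\<Sum>i\<in>UNIV. \<Sum>j\<in>UNIV. (real (cnt2 x y i j) * fw i j (obs i (cnt1 x))) *\<^sub>R
              grad (\<lambda>\<eta>. ln (pol \<eta> t i (obs i (cnt1 x)) j)) \<theta>) = (\<Sum>m\<in>UNIV. f y m *\<^sub>R g y m)" for y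
    using sum_cnt2_scaleR[of x y
        "\<lambda>i j. fw i j (obs i (cnt1 x)) *\<^sub>R grad (\<lambda>\<eta>. ln (pol \<eta> t i (obs i (cnt1 x)) j)) \<theta>"]
    by (simp add: f_def g_def ob_def)
  have cross: "(\<Sum>y\<in>UNIV. P y *\<^sub>R (f y m *\<^sub>R g y m')) = 0" if "m \<noteq> m'" for m m'
    unfolding P_def f_def g_def
  proof (rule sum_prod_cross_term_eq_0[OF that])
    show "(\<Sum>j\<in>UNIV. pol \<theta> t (x m') (ob m') j *\<^sub>R grad (\<lambda>\<eta>. ln (pol \<eta> t (x m') (ob m') j)) \<theta>) = 0"
      by (rule expected_grad_ln_eq_0) (use pol_pos pol_sum pol_diff in auto)
  qed
  have "(\<Sum>y\<in>UNIV. P y *\<^sub>R ((\<Sum>m\<in>UNIV. f y m) *\<^sub>R (\<Sum>m'\<in>UNIV. g y m')))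
      = (\<Sum>m'\<in>UNIV. \<Sum>m\<in>UNIV. \<Sum>y\<in>UNIV. P y *\<^sub>R (f y m *\<^sub>R g y m'))"
    by (simp add: scaleR_sum_left scaleR_sum_right sum.swap[of _ "UNIV :: ('m \<Rightarrow> 'a) set"])
  also have "\<dots> = (\<Sum>m'\<in>UNIV. \<Sum>m\<in>UNIV. if m = m' then \<Sum>y\<in>UNIV. P y *\<^sub>R (f y m *\<^sub>R g y m') else 0)"
    using cross by (intro sum.cong refl) auto
  also have "\<dots> = (\<Sum>m\<in>UNIV. \<Sum>y\<in>UNIV. P y *\<^sub>R (f y m *\<^sub>R g y m))"
    by simp
  also have "\<dots> = (\<Sum>y\<in>UNIV. P y *\<^sub>R (\<Sum>m\<in>UNIV. f y m *\<^sub>R g y m))"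
    by (simp add: scaleR_sum_right sum.swap[of _ "UNIV :: ('m \<Rightarrow> 'a) set"])
  finally show ?thesis by (simp add: P f g fg)
qed

lemma finite_trajs:
  "finite (trajs H :: ((nat \<Rightarrow> 'm::finite \<Rightarrow> 's::finite) \<times> (nat \<Rightarrow> 'm \<Rightarrow> 'a::finite)) set)"
  unfolding trajs_def by (intro finite_cartesian_product finite_PiE) auto

lemma sum_trajs_Suc:
  fixes F :: "(nat \<Rightarrow> 'm \<Rightarrow> 's) \<times> (nat \<Rightarrow> 'm \<Rightarrow> 'a) \<Rightarrow> 'v::comm_monoid_add"
  shows "(\<Sum>sa\<in>trajs (Suc n). F sa) =
    (\<Sum>sa\<in>trajs n. \<Sum>y\<in>UNIV. \<Sum>z\<in>UNIV. F ((fst sa)(Suc (Suc n) := z), (snd sa)(Suc n := y)))"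
proof -
  let ?extend = "\<lambda>(sa, y, z). ((fst sa)(Suc (Suc n) := z), (snd sa)(Suc n := y))
     :: (nat \<Rightarrow> 'm \<Rightarrow> 's) \<times> (nat \<Rightarrow> 'm \<Rightarrow> 'a)"
  let ?split = "\<lambda>sa :: (nat \<Rightarrow> 'm \<Rightarrow> 's) \<times> (nat \<Rightarrow> 'm \<Rightarrow> 'a).
     (((fst sa)(Suc (Suc n) := undefined), (snd sa)(Suc n := undefined)),
      snd sa (Suc n), fst sa (Suc (Suc n)))"
  have "bij_betw ?extend (trajs n \<times> UNIV \<times> UNIV) (trajs (Suc n))"
    by (rule bij_betw_byWitness[where f' = ?split])
      (auto simp: trajs_def PiE_def extensional_def)
  then have "(\<Sum>sa\<in>trajs (Suc n). F sa) =
      (\<Sum>(sa, y, z)\<in>trajs n \<times> UNIV \<times> UNIV. F ((fst sa)(Suc (Suc n) := z), (snd sa)(Suc n := y)))"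
    by (simp add: sum.reindex_bij_betw[symmetric] case_prod_unfold)
  also have "\<dots> = (\<Sum>sa\<in>trajs n. \<Sum>y\<in>UNIV. \<Sum>z\<in>UNIV. F ((fst sa)(Suc (Suc n) := z), (snd sa)(Suc n := y)))"
    by (simp only: sum.cartesian_product)
  finally show ?thesis .
qed

lemma trajprob_Suc:
  "trajprob (Suc n) b0 pol obs phi \<theta> ((fst sa)(Suc (Suc n) := z), (snd sa)(Suc n := y)) =
   trajprob n b0 pol obs phi \<theta> sa * jointpol pol obs \<theta> (Suc n) (fst sa (Suc n)) y *
     (\<Prod>m\<in>UNIV. phi (Suc n) (fst sa (Suc n) m) (y m) (cnt1 (fst sa (Suc n))) (z m))"
proof -
  let ?s = "(fst sa)(Suc (Suc n) := z)" and ?a = "(snd sa)(Suc n := y)"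
  have "(\<Prod>t\<in>{1..n}. jointpol pol obs \<theta> t (?s t) (?a t) *
           (\<Prod>m\<in>UNIV. phi t (?s t m) (?a t m) (cnt1 (?s t)) (?s (Suc t) m)))
      = (\<Prod>t\<in>{1..n}. jointpol pol obs \<theta> t (fst sa t) (snd sa t) *
           (\<Prod>m\<in>UNIV. phi t (fst sa t m) (snd sa t m) (cnt1 (fst sa t)) (fst sa (Suc t) m)))"
    by (intro prod.cong refl) auto
  then show ?thesis
    unfolding trajprob_def Let_def by (simp add: prod.nat_ivl_Suc' mult_ac)
qed

lemma sum_jointpol_eq_1:
  assumes "\<And>i ob. (\<Sum>j\<in>UNIV. pol \<theta> t i ob j) = 1"
  shows "(\<Sum>y\<in>UNIV. jointpol pol obs \<theta> t (x :: 'm::finite \<Rightarrow> 's) (y :: 'm \<Rightarrow> 'a::finite)) = 1"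
  unfolding jointpol_def by (subst sum_fun_prod) (simp add: assms)

lemma sum_transitions_eq_1:
  fixes phi :: "nat \<Rightarrow> 's::finite \<Rightarrow> 'a \<Rightarrow> ('s \<Rightarrow> nat) \<Rightarrow> 's \<Rightarrow> real"
  assumes "\<And>i j. (\<Sum>i'\<in>UNIV. phi t i j c i') = 1"
  shows "(\<Sum>z\<in>UNIV. \<Prod>m\<in>UNIV. phi t (x m) (y m) c ((z :: 'm::finite \<Rightarrow> 's::finite) m)) = 1"
  by (subst sum_fun_prod) (simp add: assms)

lemma sum_trajprob_Suc_scaleR:
  fixes G :: "('m::finite \<Rightarrow> 's::finite) \<Rightarrow> ('m \<Rightarrow> 'a::finite) \<Rightarrow> 'v::real_vector"
  assumes phi_sum: "\<And>t i j c. (\<Sum>i'\<in>UNIV. phi t i j c i') = 1" and "t \<le> Suc n"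
  shows "(\<Sum>sa\<in>trajs (Suc n). trajprob (Suc n) b0 pol obs phi \<theta> sa *\<^sub>R G (fst sa t) (snd sa t)) =
    (\<Sum>sa\<in>trajs n. \<Sum>y\<in>UNIV.
       (trajprob n b0 pol obs phi \<theta> sa * jointpol pol obs \<theta> (Suc n) (fst sa (Suc n)) y) *\<^sub>R
         G (fst sa t) (((snd sa)(Suc n := y)) t))"
proof -
  have "(\<Sum>sa\<in>trajs (Suc n). trajprob (Suc n) b0 pol obs phi \<theta> sa *\<^sub>R G (fst sa t) (snd sa t)) =
    (\<Sum>sa\<in>trajs n. \<Sum>y\<in>UNIV. \<Sum>z\<in>UNIV.
       (trajprob n b0 pol obs phi \<theta> sa * jointpol pol obs \<theta> (Suc n) (fst sa (Suc n)) y *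
        (\<Prod>m\<in>UNIV. phi (Suc n) (fst sa (Suc n) m) (y m) (cnt1 (fst sa (Suc n))) (z m))) *\<^sub>R
         G (fst sa t) (((snd sa)(Suc n := y)) t))"
    using \<open>t \<le> Suc n\<close> by (simp add: sum_trajs_Suc trajprob_Suc)
  then show ?thesis
    by (simp add: scaleR_sum_left[symmetric] sum_distrib_left[symmetric] sum_transitions_eq_1 phi_sum)
qed

lemma sum_trajprob_time_marginal:
  fixes G :: "('m::finite \<Rightarrow> 's::finite) \<Rightarrow> ('m \<Rightarrow> 'a::finite) \<Rightarrow> 'v::real_vector"
  assumes pol_sum: "\<And>t i ob. (\<Sum>j\<in>UNIV. pol \<theta> t i ob j) = 1"
    and phi_sum: "\<And>t i j c. (\<Sum>i'\<in>UNIV. phi t i j c i') = 1"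
    and "1 \<le> t" and "t \<le> H"
  shows "(\<Sum>sa\<in>trajs H. trajprob H b0 pol obs phi \<theta> sa *\<^sub>R G (fst sa t) (snd sa t)) =
    (\<Sum>sa\<in>trajs (t - 1). trajprob (t - 1) b0 pol obs phi \<theta> sa *\<^sub>R
       (\<Sum>y\<in>UNIV. jointpol pol obs \<theta> t (fst sa t) y *\<^sub>R G (fst sa t) y))"
  using \<open>t \<le> H\<close>
proof (induction H rule: dec_induct)
  case base
  obtain n where "t = Suc n" using \<open>1 \<le> t\<close> by (cases t) auto
  then show ?case
    by (simp add: sum_trajprob_Suc_scaleR phi_sum scaleR_sum_right)
next
  case (step n)
  then show ?case
    by (simp add: sum_trajprob_Suc_scaleR phi_sum scaleR_sum_left[symmetric]
        sum_distrib_left[symmetric] sum_jointpol_eq_1 pol_sum)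
qed

lemma sum_fiber_weights_scaleR:
  fixes p :: "'a \<Rightarrow> real" and F :: "'b \<Rightarrow> 'v::real_vector"
  assumes "finite A" and "finite B" and "g ` A \<subseteq> B"
  shows "(\<Sum>b\<in>B. (\<Sum>a\<in>{a\<in>A. g a = b}. p a) *\<^sub>R F b) = (\<Sum>a\<in>A. p a *\<^sub>R F (g a))"
proof -
  have "(\<Sum>b\<in>B. (\<Sum>a\<in>{a\<in>A. g a = b}. p a) *\<^sub>R F b) = (\<Sum>b\<in>B. \<Sum>a\<in>{a\<in>A. g a = b}. p a *\<^sub>R F (g a))"
    by (auto simp: scaleR_sum_left intro!: sum.cong)
  also have "\<dots> = (\<Sum>a\<in>A. p a *\<^sub>R F (g a))"
    using assms by (rule sum.group)
  finally show ?thesis .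
qed

lemma sum_margprob_scaleR:
  fixes F :: "('m::finite \<Rightarrow> 's::finite) \<Rightarrow> ('m \<Rightarrow> 'a::finite) \<Rightarrow> 'v::real_vector"
  shows "(\<Sum>x\<in>UNIV. \<Sum>y\<in>UNIV. margprob H b0 pol obs phi \<theta> t x y *\<^sub>R F x y) =
    (\<Sum>sa\<in>trajs H. trajprob H b0 pol obs phi \<theta> sa *\<^sub>R F (fst sa t) (snd sa t))"
  using sum_fiber_weights_scaleR[of "trajs H" UNIV "\<lambda>sa. (fst sa t, snd sa t)"
      "trajprob H b0 pol obs phi \<theta>" "case_prod F", OF finite_trajs finite_class.finite_UNIV subset_UNIV]
  by (simp add: margprob_def sum.cartesian_product UNIV_Times_UNIV[symmetric]
      prod_eq_iff split_def del: UNIV_Times_UNIV)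

lemma sum_margprob_scaleR_eq_sum_action_average:
  fixes F :: "('m::finite \<Rightarrow> 's::finite) \<Rightarrow> ('m \<Rightarrow> 'a::finite) \<Rightarrow> 'v::real_vector"
  assumes "\<And>t i ob. (\<Sum>j\<in>UNIV. pol \<theta> t i ob j) = 1"
    and "\<And>t i j c. (\<Sum>i'\<in>UNIV. phi t i j c i') = 1"
    and "t \<in> {1..H}"
  shows "(\<Sum>x\<in>UNIV. \<Sum>y\<in>UNIV. margprob H b0 pol obs phi \<theta> t x y *\<^sub>R F x y) =
    (\<Sum>sa\<in>trajs (t - 1). trajprob (t - 1) b0 pol obs phi \<theta> sa *\<^sub>R
       (\<Sum>y\<in>UNIV. jointpol pol obs \<theta> t (fst sa t) y *\<^sub>R F (fst sa t) y))"
  using assms by (simp add: sum_margprob_scaleR sum_trajprob_time_marginal[where G = F])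

lemma finite_Omega: "finite (Omega M H :: (nat \<Rightarrow> ('s::finite,'a::finite) ctab) set)"
proof -
  define B :: "('s,'a) ctab set" where
    "B = Pi\<^sub>E UNIV (\<lambda>_. {..M}) \<times> Pi\<^sub>E UNIV (\<lambda>_. Pi\<^sub>E UNIV (\<lambda>_. {..M})) \<times>
         Pi\<^sub>E UNIV (\<lambda>_. Pi\<^sub>E UNIV (\<lambda>_. Pi\<^sub>E UNIV (\<lambda>_. {..M})))"
  have "N t \<in> B" if "N \<in> Omega M H" "t \<in> {1..H}" for N t
  proof -
    let ?n1 = "fst (N t)" and ?n2 = "fst (snd (N t))" and ?n3 = "snd (snd (N t))"
    have s1: "(\<Sum>i\<in>UNIV. ?n1 i) = M"
      and s2: "\<And>i. (\<Sum>j\<in>UNIV. ?n2 i j) = ?n1 i"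
      and s3: "\<And>i j. (\<Sum>i'\<in>UNIV. ?n3 i j i') = ?n2 i j"
      using that unfolding Omega_def by auto
    have "?n1 i \<le> M" for i
      using member_le_sum[of i UNIV ?n1] s1 by simp
    moreover have "?n2 i j \<le> M" for i j
      using member_le_sum[of j UNIV "?n2 i"] s2[of i] \<open>?n1 i \<le> M\<close> by simp
    moreover have "?n3 i j i' \<le> M" for i j i'
      using member_le_sum[of i' UNIV "?n3 i j"] s3[of i j] \<open>?n2 i j \<le> M\<close> by simp
    ultimately show ?thesis
      unfolding B_def by (cases "N t") (auto simp: PiE_UNIV_domain)
  qed
  then have "Omega M H \<subseteq> {N. \<forall>t. (t \<in> {1..H} \<longrightarrow> N t \<in> B) \<and> (t \<notin> {1..H} \<longrightarrow> N t = zero_ctab)}"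
    unfolding Omega_def by blast
  moreover have "finite B"
    unfolding B_def by (intro finite_cartesian_product finite_PiE) auto
  ultimately show ?thesis
    by (blast intro: finite_subset finite_set_of_finite_funs)
qed

lemma counts_in_Omega:
  "sa \<in> trajs H \<Longrightarrow>
   counts H (sa :: (nat \<Rightarrow> 'm::finite \<Rightarrow> 's::finite) \<times> (nat \<Rightarrow> 'm \<Rightarrow> 'a::finite)) \<in> Omega CARD('m) H"
  unfolding Omega_def counts_def by (simp add: sum_cnt1 sum_cnt2 sum_cnt3)

lemma sum_countprob_scaleR:
  fixes F :: "(nat \<Rightarrow> ('s::finite, 'a::finite) ctab) \<Rightarrow> 'v::real_vector"
  shows "(\<Sum>N\<in>Omega CARD('m) H. countprob H b0 pol obs phi \<theta> (agents :: 'm::finite itself) N *\<^sub>R F N) =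
   (\<Sum>sa\<in>trajs H. trajprob H b0 pol obs phi \<theta> sa *\<^sub>R F (counts H (sa :: (nat \<Rightarrow> 'm \<Rightarrow> 's) \<times> _)))"
  unfolding countprob_def
  by (rule sum_fiber_weights_scaleR) (auto simp: finite_trajs finite_Omega counts_in_Omega)

theorem theorem3:
  fixes H :: nat
    and b0 :: "'s::finite \<Rightarrow> real"
    and pol :: "'p::euclidean_space \<Rightarrow> nat \<Rightarrow> 's \<Rightarrow> 'o \<Rightarrow> 'a::finite \<Rightarrow> real"
    and obs :: "'s \<Rightarrow> ('s \<Rightarrow> nat) \<Rightarrow> 'o"
    and phi :: "nat \<Rightarrow> 's \<Rightarrow> 'a \<Rightarrow> ('s \<Rightarrow> nat) \<Rightarrow> 's \<Rightarrow> real"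
    and fw :: "'s \<Rightarrow> 'a \<Rightarrow> 'o \<Rightarrow> real"
    and \<theta> :: 'p
    and agents :: "'m::finite itself"
  assumes b0_nonneg: "\<And>i. b0 i \<ge> 0"
    and b0_sum: "(\<Sum>i\<in>UNIV. b0 i) = 1"
    and pol_pos: "\<And>\<theta>' t i ob j. pol \<theta>' t i ob j > 0"
    and pol_sum: "\<And>\<theta>' t i ob. (\<Sum>j\<in>UNIV. pol \<theta>' t i ob j) = 1"
    and pol_diff: "\<And>\<theta>' t i ob j. (\<lambda>\<eta>. pol \<eta> t i ob j) differentiable (at \<theta>')"
    and phi_nonneg: "\<And>t i j n i'. phi t i j n i' \<ge> 0"
    and phi_sum: "\<And>t i j n. (\<Sum>i'\<in>UNIV. phi t i j n i') = 1"
  shows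
    "(\<Sum>t\<in>{1..H}. \<Sum>x\<in>(UNIV :: ('m \<Rightarrow> 's) set). \<Sum>y\<in>(UNIV :: ('m \<Rightarrow> 'a) set).
        margprob H b0 pol obs phi \<theta> t x y *\<^sub>R
          ((\<Sum>i\<in>UNIV. \<Sum>j\<in>UNIV. real (cnt2 x y i j) * fw i j (obs i (cnt1 x))) *\<^sub>R
             grad (\<lambda>\<eta>. ln (jointpol pol obs \<eta> t x y)) \<theta>))
     =
     (\<Sum>N\<in>Omega CARD('m) H.
        countprob H b0 pol obs phi \<theta> agents N *\<^sub>R
          (\<Sum>t\<in>{1..H}. \<Sum>i\<in>UNIV. \<Sum>j\<in>UNIV.
             (real (fst (snd (N t)) i j) * fw i j (obs i (fst (N t)))) *\<^sub>R
               grad (\<lambda>\<eta>. ln (pol \<eta> t i (obs i (fst (N t))) j)) \<theta>))"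
proof -
  let ?score = "\<lambda>t (x :: 'm \<Rightarrow> 's) (y :: 'm \<Rightarrow> 'a).
    \<Sum>i\<in>UNIV. \<Sum>j\<in>UNIV. (real (cnt2 x y i j) * fw i j (obs i (cnt1 x))) *\<^sub>R
      grad (\<lambda>\<eta>. ln (pol \<eta> t i (obs i (cnt1 x)) j)) \<theta>"
  have "(\<Sum>t\<in>{1..H}. \<Sum>x\<in>(UNIV :: ('m \<Rightarrow> 's) set). \<Sum>y\<in>(UNIV :: ('m \<Rightarrow> 'a) set).
          margprob H b0 pol obs phi \<theta> t x y *\<^sub>R
          ((\<Sum>i\<in>UNIV. \<Sum>j\<in>UNIV. real (cnt2 x y i j) * fw i j (obs i (cnt1 x))) *\<^sub>R
             grad (\<lambda>\<eta>. ln (jointpol pol obs \<eta> t x y)) \<theta>))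
      = (\<Sum>t\<in>{1..H}. \<Sum>x\<in>UNIV. \<Sum>y\<in>UNIV. margprob H b0 pol obs phi \<theta> t x y *\<^sub>R ?score t x y)"
    by (rule sum.cong[OF refl])
      (simp only: sum_margprob_scaleR_eq_sum_action_average[OF pol_sum phi_sum]
        expected_joint_score_eq_sum_local_scores[OF pol_pos pol_sum pol_diff,
          where obs = obs and fw = fw])
  also have "\<dots> = (\<Sum>sa\<in>trajs H. trajprob H b0 pol obs phi \<theta> sa *\<^sub>R
      (\<Sum>t\<in>{1..H}. ?score t (fst sa t) (snd sa t)))"
    unfolding sum_margprob_scaleR by (simp add: scaleR_sum_right) (rule sum.swap)
  also have "\<dots> = (\<Sum>N\<in>Omega CARD('m) H. countprob H b0 pol obs phi \<theta> agents N *\<^sub>R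
      (\<Sum>t\<in>{1..H}. \<Sum>i\<in>UNIV. \<Sum>j\<in>UNIV. (real (fst (snd (N t)) i j) * fw i j (obs i (fst (N t)))) *\<^sub>R
        grad (\<lambda>\<eta>. ln (pol \<eta> t i (obs i (fst (N t))) j)) \<theta>))"
    by (simp add: sum_countprob_scaleR counts_def)
  finally show ?thesis .
qed

end
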